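(* Let $a\in\mathcal A$ and let $R$ be the multiset of zeros in $\mathbb C^*$ of the Laurent polynomial $1-aa^*$. Then: (a) $\pi_1^{-1}(a)\subseteq\mathcal S$ is a disjoint union of $\mathcal N(R)$ components, each of the form $\{(a,\lambda z^kb):k\in\mathbb Z,\lambda\in\mathbb T\}$ for some fixed $(a,b)$ in that component; each component is in bijection with $\mathbb Z\times\mathbb T$; (b) if $(a,b),(a,b')\in\pi_1^{-1}(a)$, then $b,b'$ lie in different components if and only if the multisets of zeros in $\mathbb C^*$ of $b$ and $b'$ differ; moreover $b,b'$ have the same zeros on $\mathbb T$ counted with multiplicity; (c) if $b$ is a Laurent polynomial with multiset $R_b$ of zeros in $\mathbb C^*$, then $(a,b)\in\pi_1^{-1}(a)$ implies $R=\bigcup_{\alpha\in R_b}\{\alpha,1/\overline\alpha\}$; conversely, if $R=\bigcup_{\alpha\in R_b}\{\alpha,1/\overline\alpha\}$ then there exists $\lambda\in\mathbb C^*$ with $(a,\lambda b)\in\pi_1^{-1}(a)$.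
   Context: $\mathbb T$ is the unit circle, $\mathbb C^*=\mathbb C\setminus\{0\}$, $a^*(z):=\overline{a(1/\overline z)}$ for a Laurent polynomial $a$. $\mathcal S$ is the set of pairs $(a,b)$ of Laurent polynomials with $aa^*+bb^*=1$ and $0<a^*(0)<\infty$; $\pi_1(a,b)=a$, $\pi_2(a,b)=b$, $\mathcal A:=\pi_1(\mathcal S)$, $\mathcal B:=\pi_2(\mathcal S)$. Multiset unions add multiplicities. Counting function: for a finite multiset $R\subset\mathbb C^*$, define $\alpha\sim\beta$ iff $\alpha=\beta$ or $\alpha=1/\overline\beta$ (equivalence classes taken as multisets, all of even size in the cases considered); for a class $y$ let $\sharp(y):=1$ if $y$ meets $\mathbb T$ and $\sharp(y):=1+|y|/2$ otherwise; $\mathcal N(R):=\prod_{y\in R/\sim}\sharp(y)$. *)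

theory Defs
  imports Complex_Main "HOL-Library.Multiset" "HOL-Computational_Algebra.Polynomial"
begin

text \<open>Laurent polynomials over the complex numbers are represented by their
coefficient functions c :: int => complex with finite support;
c k is the coefficient of z^k.\<close>

definition lpoly :: "(int \<Rightarrow> complex) \<Rightarrow> bool" where
  "lpoly c \<longleftrightarrow> finite {k. c k \<noteq> 0}"

definition lp_eval :: "(int \<Rightarrow> complex) \<Rightarrow> complex \<Rightarrow> complex" where
  "lp_eval c z = (\<Sum>k\<in>{k. c k \<noteq> 0}. c k * z powi k)"

text \<open>a^*(z) = conj (a (1/conj z)); on coefficients: k-th coefficient is conj of the (-k)-th.\<close>
definition lp_star :: "(int \<Rightarrow> complex) \<Rightarrow> int \<Rightarrow> complex" where
  "lp_star c = (\<lambda>k. cnj (c (- k)))"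

definition lp_mul :: "(int \<Rightarrow> complex) \<Rightarrow> (int \<Rightarrow> complex) \<Rightarrow> int \<Rightarrow> complex" where
  "lp_mul c d = (\<lambda>n. \<Sum>k\<in>{k. c k \<noteq> 0}. c k * d (n - k))"

definition lp_add :: "(int \<Rightarrow> complex) \<Rightarrow> (int \<Rightarrow> complex) \<Rightarrow> int \<Rightarrow> complex" where
  "lp_add c d = (\<lambda>n. c n + d n)"

definition lp_sub :: "(int \<Rightarrow> complex) \<Rightarrow> (int \<Rightarrow> complex) \<Rightarrow> int \<Rightarrow> complex" where
  "lp_sub c d = (\<lambda>n. c n - d n)"

definition lp_one :: "int \<Rightarrow> complex" where
  "lp_one = (\<lambda>n. if n = 0 then 1 else 0)"

definition lp_scale_shift :: "complex \<Rightarrow> int \<Rightarrow> (int \<Rightarrow> complex) \<Rightarrow> int \<Rightarrow> complex" where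
  "lp_scale_shift l k c = (\<lambda>n. l * c (n - k))"

text \<open>The polynomial z^(-m) c(z), m the lowest exponent; its zeros in C* are those of c.\<close>
definition lp_to_poly :: "(int \<Rightarrow> complex) \<Rightarrow> complex poly" where
  "lp_to_poly c = (\<Sum>k\<in>{k. c k \<noteq> 0}. monom (c k) (nat (k - Min {k. c k \<noteq> 0})))"

definition lp_zeros :: "(int \<Rightarrow> complex) \<Rightarrow> complex multiset" where
  "lp_zeros c = Abs_multiset (\<lambda>\<alpha>. if \<alpha> = 0 then 0 else order \<alpha> (lp_to_poly c))"

definition S_set :: "((int \<Rightarrow> complex) \<times> (int \<Rightarrow> complex)) set" where
  "S_set = {(a, b). lpoly a \<and> lpoly b \<and>
      lp_add (lp_mul a (lp_star a)) (lp_mul b (lp_star b)) = lp_one \<and>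
      (\<forall>k<0. lp_star a k = 0) \<and> lp_star a 0 \<in> \<real> \<and> Re (lp_star a 0) > 0}"

definition A_set :: "(int \<Rightarrow> complex) set" where
  "A_set = fst ` S_set"

definition component :: "(int \<Rightarrow> complex) \<Rightarrow> (int \<Rightarrow> complex) \<Rightarrow> ((int \<Rightarrow> complex) \<times> (int \<Rightarrow> complex)) set" where
  "component a b = {(a, lp_scale_shift l k b) | k l. cmod l = 1}"

definition zclass :: "complex multiset \<Rightarrow> complex \<Rightarrow> complex multiset" where
  "zclass R \<alpha> = filter_mset (\<lambda>x. x = \<alpha> \<or> x = 1 / cnj \<alpha>) R"

definition class_count :: "complex multiset \<Rightarrow> nat" where
  "class_count y = (if \<exists>x\<in>#y. cmod x = 1 then 1 else 1 + size y div 2)"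

definition NN :: "complex multiset \<Rightarrow> nat" where
  "NN R = (\<Prod>y\<in>zclass R ` set_mset R. class_count y)"

end

theory Submission
  imports Defs "HOL-Computational_Algebra.Fundamental_Theorem_Algebra"
begin

text \<open>Write a nonzero Laurent polynomial as b = z^m p with p(0) \<noteq> 0. Then b b^* = z^(-deg p) p p^#,
where p^# is the conjugate reflection of p, whose roots are the reflections 1/conj \<alpha> of the roots
of p. Hence the zero multiset Z of any b with (a, b) \<in> S satisfies Z + 1/conj Z = R; as
1/conj \<alpha> = \<alpha> on the unit circle, the zeros of b on the circle are half of those of R there.
Conversely, every such Z is the zero multiset of some b, and after multiplying b by a positive
constant (compare the constant coefficients \<Sum>|b_k|^2 of b b^*) we get (a, b) \<in> S.
Two admissible b with the same zeros differ by a factor \<lambda> z^k, and |\<lambda>| = 1 since b b^* is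
prescribed; so the components correspond to the solutions Z of Z + 1/conj Z = R. These are counted
class by class: a class on the unit circle admits exactly one solution, a class {\<alpha>, 1/conj \<alpha>}
off the circle containing n copies of each point admits n + 1.\<close>

section \<open>Reflection in the unit circle\<close>

definition inv_cnj :: "complex \<Rightarrow> complex" where
  "inv_cnj z = 1 / cnj z"

lemma inv_cnj_inv_cnj [simp]: "inv_cnj (inv_cnj z) = z"
  by (simp add: inv_cnj_def)

lemma inv_cnj_eq_0_iff [simp]: "inv_cnj z = 0 \<longleftrightarrow> z = 0"
  by (simp add: inv_cnj_def)

lemma inv_cnj_eq_iff: "inv_cnj x = y \<longleftrightarrow> x = inv_cnj y"
  by (metis inv_cnj_inv_cnj)

lemma norm_inv_cnj: "cmod (inv_cnj z) = 1 / cmod z"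
  by (simp add: inv_cnj_def norm_divide)

lemma norm_eq_1_iff_mult_cnj: "cmod z = 1 \<longleftrightarrow> z * cnj z = 1"
proof -
  have "z * cnj z = 1 \<longleftrightarrow> (cmod z)\<^sup>2 = 1"
    by (metis complex_norm_square of_real_eq_1_iff of_real_power)
  then show ?thesis using norm_ge_zero[of z] by (auto simp: power2_eq_1_iff)
qed

lemma inv_cnj_fixed_iff: "z \<noteq> 0 \<Longrightarrow> inv_cnj z = z \<longleftrightarrow> cmod z = 1"
  by (auto simp: inv_cnj_def norm_eq_1_iff_mult_cnj field_simps)

lemma count_image_inv_cnj: "count (image_mset inv_cnj Z) x = count Z (inv_cnj x)"
proof -
  have "inv_cnj -` {x} = {inv_cnj x}" by (auto simp: inv_cnj_eq_iff)
  then show ?thesis by (cases "inv_cnj x \<in># Z") (auto simp: count_image_mset not_in_iff)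
qed

lemma filter_mset_image_inv_cnj:
  "(\<And>x. Q (inv_cnj x) = Q x) \<Longrightarrow>
    filter_mset Q (image_mset inv_cnj Z) = image_mset inv_cnj (filter_mset Q Z)"
  using image_mset_filter_mset_swap[of inv_cnj Q Z] by simp

lemma filter_mset_circle_add_image_inv_cnj:
  "filter_mset (\<lambda>z. cmod z = 1) (Z + image_mset inv_cnj Z)
    = filter_mset (\<lambda>z. cmod z = 1) Z + filter_mset (\<lambda>z. cmod z = 1) Z"
proof -
  have "filter_mset (\<lambda>z. cmod z = 1) (image_mset inv_cnj Z)
      = image_mset inv_cnj (filter_mset (\<lambda>z. cmod z = 1) Z)"
    by (rule filter_mset_image_inv_cnj) (auto simp: norm_inv_cnj divide_eq_1_iff)
  also have "\<dots> = image_mset (\<lambda>z. z) (filter_mset (\<lambda>z. cmod z = 1) Z)"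
  proof (rule image_mset_cong)
    fix z assume "z \<in># filter_mset (\<lambda>z. cmod z = 1) Z"
    then have "cmod z = 1" "z \<noteq> 0" by auto
    then show "inv_cnj z = z" using inv_cnj_fixed_iff by simp
  qed
  finally show ?thesis by simp
qed

lemma sum_mset_pair_inv_cnj: "(\<Sum>\<alpha>\<in>#Z. {#\<alpha>, 1 / cnj \<alpha>#}) = Z + image_mset inv_cnj Z"
  by (induction Z) (simp_all add: inv_cnj_def)

section \<open>The conjugate reflection of a polynomial\<close>

text \<open>The polynomial z^(deg p) conj (p (1 / conj z)), the counterpart of the star operation
  (lemma lp_star_lp_of_poly).\<close>

definition cnj_reflect :: "complex poly \<Rightarrow> complex poly" where
  "cnj_reflect p = reflect_poly (map_poly cnj p)"

lemma coeff_map_poly_cnj [simp]: "coeff (map_poly cnj p) i = cnj (coeff p i)"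
  by (simp add: coeff_map_poly)

lemma degree_map_poly_cnj [simp]: "degree (map_poly cnj p) = degree p"
  by (rule degree_map_poly) simp

lemma map_poly_cnj_mult: "map_poly cnj (p * q) = map_poly cnj p * map_poly cnj q"
  by (rule poly_eqI) (simp add: coeff_mult)

lemma coeff_cnj_reflect:
  "coeff (cnj_reflect p) n = (if n \<le> degree p then cnj (coeff p (degree p - n)) else 0)"
  by (simp add: cnj_reflect_def coeff_reflect_poly)

lemma cnj_reflect_eq_0_iff [simp]: "cnj_reflect p = 0 \<longleftrightarrow> p = 0"
  by (simp add: cnj_reflect_def map_poly_eq_0_iff)

lemma cnj_reflect_mult: "cnj_reflect (p * q) = cnj_reflect p * cnj_reflect q"
  by (simp add: cnj_reflect_def map_poly_cnj_mult reflect_poly_mult)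

lemma cnj_reflect_smult: "cnj_reflect (smult c p) = smult (cnj c) (cnj_reflect p)"
  by (simp add: cnj_reflect_def map_poly_smult reflect_poly_smult)

lemma coeff_0_cnj_reflect: "coeff (cnj_reflect p) 0 = cnj (lead_coeff p)"
  by (simp add: coeff_cnj_reflect)

lemma degree_cnj_reflect: "coeff p 0 \<noteq> 0 \<Longrightarrow> degree (cnj_reflect p) = degree p"
  by (simp add: cnj_reflect_def)

lemma cnj_reflect_linear:
  "z \<noteq> 0 \<Longrightarrow> cnj_reflect [:-z, 1:] = smult (- cnj z) [:- inv_cnj z, 1:]"
  by (rule poly_eqI) (auto simp: coeff_cnj_reflect coeff_pCons inv_cnj_def split: nat.splits)

lemma prod_linear_factors_add_mset:
  "(\<Prod>x\<in>#add_mset y Z. [:-x, 1:]) = [:-y, 1:] * (\<Prod>x\<in>#Z. [:-x, 1:])"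
  by (simp only: image_mset_add_mset prod_mset.add_mset)

lemma proots_prod_linear_factors: "proots (\<Prod>x\<in>#Z. [:-x, 1:]) = (Z :: complex multiset)"
proof (induction Z)
  case (add x Z)
  then show ?case
    unfolding prod_linear_factors_add_mset by (subst proots_mult) auto
qed simp

lemma proots_cnj_reflect_prod_linear_factors:
  "0 \<notin># Z \<Longrightarrow> proots (cnj_reflect (\<Prod>x\<in>#Z. [:-x, 1:])) = image_mset inv_cnj Z"
proof (induction Z)
  case (add x Z)
  then have "x \<noteq> 0" by auto
  then have "proots (cnj_reflect [:-x, 1:]) = {#inv_cnj x#}"
    unfolding cnj_reflect_linear[OF \<open>x \<noteq> 0\<close>] by (subst proots_smult) auto
  with add show ?case
    unfolding prod_linear_factors_add_mset cnj_reflect_mult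
    by (subst proots_mult) auto
qed (simp add: cnj_reflect_def)

lemma proots_cnj_reflect:
  assumes "coeff p 0 \<noteq> 0"
  shows "proots (cnj_reflect p) = image_mset inv_cnj (proots p)"
proof -
  have p: "p \<noteq> 0" using assms by auto
  then have "0 \<notin># proots p" using assms by (simp add: poly_0_coeff_0)
  moreover have "cnj_reflect p = smult (cnj (lead_coeff p)) (cnj_reflect (\<Prod>x\<in>#proots p. [:-x, 1:]))"
    by (subst (1) complex_poly_decompose_multiset[symmetric]) (rule cnj_reflect_smult)
  ultimately show ?thesis
    using p by (simp add: proots_cnj_reflect_prod_linear_factors)
qed

lemma poly_eq_smult_if_proots_eq:
  fixes p q :: "complex poly"
  assumes "p \<noteq> 0" "proots p = proots q"
  shows "q = smult (lead_coeff q / lead_coeff p) p"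
proof -
  have "smult (lead_coeff q / lead_coeff p) p
      = smult (lead_coeff q / lead_coeff p) (smult (lead_coeff p) (\<Prod>x\<in>#proots q. [:-x, 1:]))"
    by (subst (1) complex_poly_decompose_multiset[of p, symmetric]) (simp add: assms(2))
  also have "\<dots> = smult (lead_coeff q) (\<Prod>x\<in>#proots q. [:-x, 1:])"
    using assms(1) by simp
  also have "\<dots> = q" by (rule complex_poly_decompose_multiset)
  finally show ?thesis by simp
qed

section \<open>Laurent polynomials as shifted polynomials\<close>

definition lp_of_poly :: "int \<Rightarrow> complex poly \<Rightarrow> int \<Rightarrow> complex" where
  "lp_of_poly m p = (\<lambda>n. if m \<le> n then coeff p (nat (n - m)) else 0)"

lemma support_lp_of_poly:
  "{k. lp_of_poly m p k \<noteq> 0} \<subseteq> (\<lambda>i. m + int i) ` {..degree p}"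
proof
  fix k assume "k \<in> {k. lp_of_poly m p k \<noteq> 0}"
  then have "m \<le> k" "coeff p (nat (k - m)) \<noteq> 0" by (auto simp: lp_of_poly_def split: if_splits)
  then have "nat (k - m) \<le> degree p" "k = m + int (nat (k - m))" by (auto intro: le_degree)
  then show "k \<in> (\<lambda>i. m + int i) ` {..degree p}" by blast
qed

lemma lpoly_lp_of_poly: "lpoly (lp_of_poly m p)"
  unfolding lpoly_def by (rule finite_subset[OF support_lp_of_poly]) simp

lemma lp_of_poly_eq_0_iff [simp]: "lp_of_poly m p = (\<lambda>_. 0) \<longleftrightarrow> p = 0"
proof
  assume "lp_of_poly m p = (\<lambda>_. 0)"
  then have "lp_of_poly m p (m + int i) = 0" for i by simp
  then show "p = 0" by (intro poly_eqI) (simp add: lp_of_poly_def)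
qed (simp add: lp_of_poly_def fun_eq_iff)

lemma lp_star_lp_of_poly:
  "lp_star (lp_of_poly m p) = lp_of_poly (- m - int (degree p)) (cnj_reflect p)"
proof
  fix k
  consider "m \<le> -k" "- m - int (degree p) \<le> k" | "m \<le> -k" "k < - m - int (degree p)" | "- k < m"
    by linarith
  then show "lp_star (lp_of_poly m p) k = lp_of_poly (- m - int (degree p)) (cnj_reflect p) k"
  proof cases
    case 1
    then have "nat (k - (- m - int (degree p))) \<le> degree p"
      "degree p - nat (k - (- m - int (degree p))) = nat (- k - m)" by linarith+
    with 1 show ?thesis by (simp add: lp_star_def lp_of_poly_def coeff_cnj_reflect)
  next
    case 2
    then have "degree p < nat (- k - m)" by linarith
    with 2 show ?thesis by (simp add: lp_star_def lp_of_poly_def coeff_eq_0)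
  qed (auto simp: lp_star_def lp_of_poly_def coeff_cnj_reflect)
qed

lemma lp_mul_eq_sum_superset:
  assumes "finite A" "{k. c k \<noteq> 0} \<subseteq> A"
  shows "lp_mul c d n = (\<Sum>k\<in>A. c k * d (n - k))"
  unfolding lp_mul_def using assms by (intro sum.mono_neutral_left) auto

lemma lp_mul_lp_of_poly: "lp_mul (lp_of_poly m p) (lp_of_poly m' q) = lp_of_poly (m + m') (p * q)"
proof
  fix n
  have "lp_mul (lp_of_poly m p) (lp_of_poly m' q) n
      = (\<Sum>k\<in>(\<lambda>i. m + int i) ` {..degree p}. lp_of_poly m p k * lp_of_poly m' q (n - k))"
    by (rule lp_mul_eq_sum_superset[OF _ support_lp_of_poly]) simp
  also have "\<dots> = (\<Sum>i\<le>degree p. coeff p i * lp_of_poly m' q (n - m - int i))"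
    by (subst sum.reindex) (auto simp: inj_on_def lp_of_poly_def algebra_simps)
  also have "\<dots> = lp_of_poly (m + m') (p * q) n"
  proof (cases "m + m' \<le> n")
    case True
    define N where "N = nat (n - m - m')"
    have N: "m' \<le> n - m - int i \<longleftrightarrow> i \<le> N" "i \<le> N \<Longrightarrow> nat (n - m - int i - m') = N - i" for i
      using True unfolding N_def by linarith+
    have "(\<Sum>i\<le>degree p. coeff p i * lp_of_poly m' q (n - m - int i))
        = (\<Sum>i\<in>{..degree p} \<inter> {..N}. coeff p i * coeff q (N - i))"
      unfolding sum.inter_restrict[OF finite_atMost]
      by (intro sum.cong) (auto simp: lp_of_poly_def N)
    also have "\<dots> = (\<Sum>i\<le>N. coeff p i * coeff q (N - i))"
      by (intro sum.mono_neutral_left) (auto simp: coeff_eq_0)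
    also have "\<dots> = lp_of_poly (m + m') (p * q) n"
      using True by (simp add: coeff_mult lp_of_poly_def N_def algebra_simps)
    finally show ?thesis .
  next
    case False
    then show ?thesis by (auto simp: lp_of_poly_def intro!: sum.neutral)
  qed
  finally show "lp_mul (lp_of_poly m p) (lp_of_poly m' q) n = lp_of_poly (m + m') (p * q) n" .
qed

lemma lp_scale_shift_lp_of_poly:
  "lp_scale_shift l k (lp_of_poly m p) = lp_of_poly (m + k) (smult l p)"
  by (auto simp: lp_scale_shift_def lp_of_poly_def fun_eq_iff algebra_simps)

lemma lp_of_poly_eq_iff:
  assumes "coeff p 0 \<noteq> 0" "coeff q 0 \<noteq> 0"
  shows "lp_of_poly m p = lp_of_poly m' q \<longleftrightarrow> m = m' \<and> p = q"
proof
  assume eq: "lp_of_poly m p = lp_of_poly m' q"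
  have "lp_of_poly m p m \<noteq> 0" "lp_of_poly m' q m' \<noteq> 0"
    using assms by (simp_all add: lp_of_poly_def)
  then have "m = m'"
    using eq by (metis lp_of_poly_def linorder_le_cases order_antisym)
  moreover have "coeff p i = coeff q i" for i
    using fun_cong[OF eq, of "m + int i"] \<open>m = m'\<close> by (simp add: lp_of_poly_def)
  ultimately show "m = m' \<and> p = q" by (simp add: poly_eqI)
qed simp

lemma lp_of_poly_normal_form:
  assumes "lpoly c" "c \<noteq> (\<lambda>_. 0)"
  obtains m p where "coeff p 0 \<noteq> 0" "c = lp_of_poly m p"
proof -
  define A where "A = {k. c k \<noteq> 0}"
  have A: "finite A" "A \<noteq> {}" using assms by (auto simp: lpoly_def A_def)
  define m where "m = Min A"
  define p where "p = (\<Sum>i\<le>nat (Max A - m). monom (c (m + int i)) i)"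
  have coeff_p: "coeff p i = (if i \<le> nat (Max A - m) then c (m + int i) else 0)" for i
    by (simp add: p_def coeff_sum coeff_monom)
  have "c m \<noteq> 0" using Min_in[OF A] by (simp add: m_def A_def)
  moreover have "c n = lp_of_poly m p n" for n
  proof (cases "m \<le> n \<and> n \<le> Max A")
    case True
    then have "nat (n - m) \<le> nat (Max A - m)" by (intro nat_mono) simp
    with True show ?thesis by (simp add: lp_of_poly_def coeff_p)
  next
    case False
    then have "n \<notin> A" using Min_le[OF A(1)] Max_ge[OF A(1)] m_def by force
    then show ?thesis using False by (auto simp: lp_of_poly_def coeff_p A_def)
  qed
  ultimately show ?thesis by (intro that[of p m]) (auto simp: coeff_p)
qed

lemma lp_to_poly_lp_of_poly:
  assumes "coeff p 0 \<noteq> 0"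
  shows "lp_to_poly (lp_of_poly m p) = p"
proof -
  let ?S = "{k. lp_of_poly m p k \<noteq> 0}"
  have S: "?S = (\<lambda>i. m + int i) ` {i. coeff p i \<noteq> 0}"
    by (auto simp: lp_of_poly_def split: if_splits intro!: image_eqI[of _ _ "nat (_ - m)"])
  have "Min ?S = m"
    using assms lpoly_lp_of_poly[of m p]
    by (intro Min_eqI) (auto simp: lpoly_def lp_of_poly_def split: if_splits)
  then have "lp_to_poly (lp_of_poly m p) = (\<Sum>k\<in>?S. monom (lp_of_poly m p k) (nat (k - m)))"
    by (simp add: lp_to_poly_def)
  also have "\<dots> = (\<Sum>i | coeff p i \<noteq> 0. monom (coeff p i) i)"
    unfolding S by (subst sum.reindex) (auto simp: inj_on_def lp_of_poly_def)
  also have "\<dots> = (\<Sum>i\<le>degree p. monom (coeff p i) i)"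
    by (intro sum.mono_neutral_left) (auto simp: le_degree)
  also have "\<dots> = p" by (rule poly_as_sum_of_monoms)
  finally show ?thesis .
qed

lemma lp_zeros_lp_of_poly:
  assumes "coeff p 0 \<noteq> 0"
  shows "lp_zeros (lp_of_poly m p) = proots p"
proof -
  have "p \<noteq> 0" "order 0 p = 0"
    using assms by (auto simp: order_0I poly_0_coeff_0)
  then have "(\<lambda>\<alpha>. if \<alpha> = 0 then 0 else order \<alpha> (lp_to_poly (lp_of_poly m p))) = count (proots p)"
    by (auto simp: lp_to_poly_lp_of_poly[OF assms])
  then show ?thesis by (simp add: lp_zeros_def count_inverse)
qed

section \<open>The Laurent polynomial b b^*\<close>

lemma lp_mul_zero_left [simp]: "lp_mul (\<lambda>_. 0) d = (\<lambda>_. 0)"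
  by (simp add: lp_mul_def)

lemma lp_mul_star_lp_of_poly:
  "lp_mul (lp_of_poly m p) (lp_star (lp_of_poly m p)) = lp_of_poly (- int (degree p)) (p * cnj_reflect p)"
  by (simp add: lp_star_lp_of_poly lp_mul_lp_of_poly)

lemma coeff_0_mult_cnj_reflect: "coeff p 0 \<noteq> 0 \<Longrightarrow> coeff (p * cnj_reflect p) 0 \<noteq> 0"
  by (auto simp: coeff_mult_0 coeff_0_cnj_reflect)

lemma degree_mult_cnj_reflect: "coeff p 0 \<noteq> 0 \<Longrightarrow> degree (p * cnj_reflect p) = 2 * degree p"
  by (subst degree_mult_eq) (auto simp: degree_cnj_reflect)

lemma lp_zeros_mul_star:
  assumes "lpoly b" "b \<noteq> (\<lambda>_. 0)"
  shows "lp_zeros (lp_mul b (lp_star b)) = lp_zeros b + image_mset inv_cnj (lp_zeros b)"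
proof -
  obtain m p where p: "coeff p 0 \<noteq> 0" "b = lp_of_poly m p"
    using lp_of_poly_normal_form[OF assms] .
  then have "p \<noteq> 0" by auto
  with p show ?thesis
    by (simp add: lp_mul_star_lp_of_poly lp_zeros_lp_of_poly coeff_0_mult_cnj_reflect
        proots_mult proots_cnj_reflect)
qed

lemma zero_notin_lp_zeros:
  assumes "lpoly b" "b \<noteq> (\<lambda>_. 0)"
  shows "0 \<notin># lp_zeros b"
proof -
  obtain m p where p: "coeff p 0 \<noteq> 0" "b = lp_of_poly m p"
    using lp_of_poly_normal_form[OF assms] .
  then have "p \<noteq> 0" by auto
  with p show ?thesis by (simp add: lp_zeros_lp_of_poly poly_0_coeff_0)
qed

lemma lp_scale_shift_lp_scale_shift:
  "lp_scale_shift l k (lp_scale_shift l' k' b) = lp_scale_shift (l * l') (k + k') b"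
  by (simp add: lp_scale_shift_def fun_eq_iff diff_diff_eq mult.assoc add.commute)

lemma lp_scale_shift_1_0 [simp]: "lp_scale_shift 1 0 b = b"
  by (simp add: lp_scale_shift_def)

lemma lpoly_lp_scale_shift: "lpoly b \<Longrightarrow> lpoly (lp_scale_shift l k b)"
proof -
  assume "lpoly b"
  have "{n. lp_scale_shift l k b n \<noteq> 0} \<subseteq> (\<lambda>i. i + k) ` {i. b i \<noteq> 0}"
    by (auto simp: lp_scale_shift_def intro!: image_eqI[of _ _ "_ - k"])
  with \<open>lpoly b\<close> show ?thesis unfolding lpoly_def by (auto intro: finite_subset)
qed

lemma lp_mul_star_lp_scale_shift:
  "lp_mul (lp_scale_shift l k b) (lp_star (lp_scale_shift l k b))
    = lp_scale_shift (l * cnj l) 0 (lp_mul b (lp_star b))"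
proof (cases "l = 0")
  case False
  have support: "{j. lp_scale_shift l k b j \<noteq> 0} = (\<lambda>i. i + k) ` {i. b i \<noteq> 0}"
    using False by (auto simp: lp_scale_shift_def intro!: image_eqI[of _ _ "_ - k"])
  show ?thesis
  proof
    fix n
    have "lp_mul (lp_scale_shift l k b) (lp_star (lp_scale_shift l k b)) n
        = (\<Sum>i | b i \<noteq> 0. (l * cnj l) * (b i * cnj (b (i - n))))"
      unfolding lp_mul_def support by (subst sum.reindex) (auto simp: lp_scale_shift_def lp_star_def ac_simps)
    also have "\<dots> = lp_scale_shift (l * cnj l) 0 (lp_mul b (lp_star b)) n"
      by (simp add: lp_scale_shift_def lp_mul_def lp_star_def sum_distrib_left)
    finally show "lp_mul (lp_scale_shift l k b) (lp_star (lp_scale_shift l k b)) n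
        = lp_scale_shift (l * cnj l) 0 (lp_mul b (lp_star b)) n" .
  qed
qed (simp add: lp_scale_shift_def)

lemma lp_zeros_eq_iff_lp_scale_shift:
  assumes "lpoly b" "b \<noteq> (\<lambda>_. 0)" "lpoly c" "c \<noteq> (\<lambda>_. 0)"
  shows "lp_zeros b = lp_zeros c \<longleftrightarrow> (\<exists>l k. l \<noteq> 0 \<and> c = lp_scale_shift l k b)"
proof -
  obtain m p where p: "coeff p 0 \<noteq> 0" "b = lp_of_poly m p"
    using lp_of_poly_normal_form[OF assms(1,2)] .
  obtain n q where q: "coeff q 0 \<noteq> 0" "c = lp_of_poly n q"
    using lp_of_poly_normal_form[OF assms(3,4)] .
  show ?thesis
  proof
    assume "lp_zeros b = lp_zeros c"
    then have "proots p = proots q" using p q by (simp add: lp_zeros_lp_of_poly)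
    then have "q = smult (lead_coeff q / lead_coeff p) p"
      using p q by (intro poly_eq_smult_if_proots_eq) auto
    then have "c = lp_scale_shift (lead_coeff q / lead_coeff p) (n - m) b"
      using p q by (simp add: lp_scale_shift_lp_of_poly)
    moreover have "lead_coeff q / lead_coeff p \<noteq> 0" using p q by auto
    ultimately show "\<exists>l k. l \<noteq> 0 \<and> c = lp_scale_shift l k b" by blast
  next
    assume "\<exists>l k. l \<noteq> 0 \<and> c = lp_scale_shift l k b"
    then obtain l k where "l \<noteq> 0" "c = lp_of_poly (m + k) (smult l p)"
      using p by (auto simp: lp_scale_shift_lp_of_poly)
    with p show "lp_zeros b = lp_zeros c" by (simp add: lp_zeros_lp_of_poly)
  qed
qed

lemma lp_mul_star_at_0:
  "lp_mul b (lp_star b) 0 = of_real (\<Sum>k | b k \<noteq> 0. (cmod (b k))\<^sup>2)"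
  by (simp add: lp_mul_def lp_star_def flip: complex_norm_square del: of_real_power)

lemma sum_norm_square_pos:
  assumes "lpoly b" "b \<noteq> (\<lambda>_. 0)"
  shows "(\<Sum>k | b k \<noteq> 0. (cmod (b k))\<^sup>2) > 0"
proof -
  obtain k where "b k \<noteq> 0" using assms(2) by auto
  with assms(1) show ?thesis
    by (intro sum_pos2[of _ k]) (auto simp: lpoly_def)
qed

lemma lp_mul_star_eq_if_same_zeros:
  assumes b: "lpoly b" "b \<noteq> (\<lambda>_. 0)" and c: "lpoly c" "c \<noteq> (\<lambda>_. 0)"
    and zeros: "lp_zeros (lp_mul b (lp_star b)) = lp_zeros (lp_mul c (lp_star c))"
  shows "\<exists>r>0. lp_mul c (lp_star c) = lp_scale_shift (of_real r) 0 (lp_mul b (lp_star b))"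
proof -
  obtain m p where p: "coeff p 0 \<noteq> 0" "b = lp_of_poly m p"
    using lp_of_poly_normal_form[OF b] .
  obtain n q where q: "coeff q 0 \<noteq> 0" "c = lp_of_poly n q"
    using lp_of_poly_normal_form[OF c] .
  define \<mu> where "\<mu> = lead_coeff (q * cnj_reflect q) / lead_coeff (p * cnj_reflect p)"
  have "proots (p * cnj_reflect p) = proots (q * cnj_reflect q)"
    using zeros p q by (simp add: lp_mul_star_lp_of_poly lp_zeros_lp_of_poly coeff_0_mult_cnj_reflect)
  then have Q: "q * cnj_reflect q = smult \<mu> (p * cnj_reflect p)"
    unfolding \<mu>_def using coeff_0_mult_cnj_reflect[OF p(1)]
    by (intro poly_eq_smult_if_proots_eq) auto
  then have "\<mu> \<noteq> 0" using coeff_0_mult_cnj_reflect[OF q(1)] by auto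
  then have "degree q = degree p"
    using arg_cong[OF Q, of degree] by (simp add: degree_mult_cnj_reflect p(1) q(1))
  with Q have cc: "lp_mul c (lp_star c) = lp_scale_shift \<mu> 0 (lp_mul b (lp_star b))"
    using p q by (simp add: lp_mul_star_lp_of_poly lp_scale_shift_lp_of_poly)
  \<comment> \<open>The constant coefficients of b b^* and c c^* are positive reals, hence so is \<mu>.\<close>
  define sb where "sb = (\<Sum>k | b k \<noteq> 0. (cmod (b k))\<^sup>2)"
  define sc where "sc = (\<Sum>k | c k \<noteq> 0. (cmod (c k))\<^sup>2)"
  have "sb > 0" "sc > 0"
    unfolding sb_def sc_def using sum_norm_square_pos[OF b] sum_norm_square_pos[OF c] by simp_all
  have "of_real sc = \<mu> * of_real sb"
    using fun_cong[OF cc, of 0] by (simp add: lp_scale_shift_def lp_mul_star_at_0 sb_def sc_def)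
  then have "\<mu> = of_real (sc / sb)" using \<open>sb > 0\<close> by (simp add: field_simps)
  with cc \<open>sb > 0\<close> \<open>sc > 0\<close> show ?thesis by (intro exI[of _ "sc / sb"]) simp
qed

section \<open>Counting the solutions of Z + 1/conj Z = R\<close>

text \<open>The possible zero multisets of b, given the zero multiset R of b b^*.\<close>

definition halves :: "complex multiset \<Rightarrow> complex multiset set" where
  "halves R = {Z. 0 \<notin># Z \<and> Z + image_mset inv_cnj Z = R}"

lemma halves_iff_count:
  "Z \<in> halves R \<longleftrightarrow> count Z 0 = 0 \<and> (\<forall>x. count Z x + count Z (inv_cnj x) = count R x)"
  unfolding halves_def by (auto simp: multiset_eq_iff count_image_inv_cnj count_eq_zero_iff)

lemma halves_subset: "Z \<in> halves R \<Longrightarrow> Z \<subseteq># R"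
  by (auto simp: halves_def)

lemma zero_notin_if_halves: "Z \<in> halves R \<Longrightarrow> 0 \<notin># R"
  by (auto simp: halves_def)

lemma count_le_if_halves: "Z \<in> halves R \<Longrightarrow> count Z x \<le> count R x"
  by (auto simp: halves_def)

lemma halves_filter:
  "(\<And>x. Q (inv_cnj x) = Q x) \<Longrightarrow> Z \<in> halves R \<Longrightarrow> filter_mset Q Z \<in> halves (filter_mset Q R)"
  by (auto simp: halves_def filter_mset_image_inv_cnj[symmetric])

lemma bij_betw_halves_filter:
  assumes Q: "\<And>x. Q (inv_cnj x) = Q x"
  shows "bij_betw (\<lambda>Z. (filter_mset Q Z, filter_mset (\<lambda>x. \<not> Q x) Z)) (halves R)
           (halves (filter_mset Q R) \<times> halves (filter_mset (\<lambda>x. \<not> Q x) R))"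
proof (rule bij_betw_byWitness[where f' = "\<lambda>(X, Y). X + Y"]; safe)
  fix X Y assume XY: "X \<in> halves (filter_mset Q R)" "Y \<in> halves (filter_mset (\<lambda>x. \<not> Q x) R)"
  have "\<forall>x\<in>#X. Q x" "\<forall>y\<in>#Y. \<not> Q y"
    using XY by (auto dest!: halves_subset mset_subset_eqD)
  then have "filter_mset Q X = X" "filter_mset (\<lambda>x. \<not> Q x) Y = Y"
    by (simp_all add: filter_mset_eq_conv)
  with \<open>\<forall>x\<in>#X. Q x\<close> \<open>\<forall>y\<in>#Y. \<not> Q y\<close>
  show "filter_mset Q (X + Y) = X" "filter_mset (\<lambda>x. \<not> Q x) (X + Y) = Y"
    by simp_all
  have "X + Y + image_mset inv_cnj (X + Y) = (X + image_mset inv_cnj X) + (Y + image_mset inv_cnj Y)"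
    by (simp add: ac_simps)
  with XY show "X + Y \<in> halves R"
    by (simp add: halves_def multiset_partition[symmetric])
next
  fix Z assume "Z \<in> halves R"
  then show "filter_mset Q Z \<in> halves (filter_mset Q R)"
    "filter_mset (\<lambda>x. \<not> Q x) Z \<in> halves (filter_mset (\<lambda>x. \<not> Q x) R)"
    using Q by (auto intro: halves_filter)
qed (simp add: multiset_partition[symmetric])

definition refl_equiv :: "complex \<Rightarrow> complex \<Rightarrow> bool" where
  "refl_equiv \<alpha> x \<longleftrightarrow> x = \<alpha> \<or> x = inv_cnj \<alpha>"

lemma refl_equiv_inv_cnj: "refl_equiv \<alpha> (inv_cnj x) = refl_equiv \<alpha> x"
  unfolding refl_equiv_def by (metis inv_cnj_inv_cnj)

lemma refl_equiv_class_eq: "refl_equiv \<alpha> x \<Longrightarrow> refl_equiv x = refl_equiv \<alpha>"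
  unfolding refl_equiv_def by (auto simp: fun_eq_iff)

lemma refl_equiv_trans: "refl_equiv \<alpha> y \<Longrightarrow> refl_equiv x y \<Longrightarrow> refl_equiv \<alpha> x"
  unfolding refl_equiv_def by (metis inv_cnj_inv_cnj)

lemma zclass_eq_filter_refl_equiv: "zclass R \<alpha> = filter_mset (refl_equiv \<alpha>) R"
  unfolding zclass_def by (rule filter_mset_cong) (auto simp: refl_equiv_def inv_cnj_def)

lemma NN_split_class:
  assumes "\<alpha> \<in># R"
  shows "NN R = class_count (filter_mset (refl_equiv \<alpha>) R) * NN (filter_mset (\<lambda>x. \<not> refl_equiv \<alpha> x) R)"
proof -
  define R' where "R' = filter_mset (\<lambda>x. \<not> refl_equiv \<alpha> x) R"
  have other_class: "zclass R' x = zclass R x" if "\<not> refl_equiv \<alpha> x" for x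
    unfolding zclass_eq_filter_refl_equiv R'_def filter_filter_mset
    using that refl_equiv_trans by (intro filter_mset_cong) auto
  have "zclass R ` set_mset R = insert (zclass R \<alpha>) (zclass R' ` set_mset R')"
  proof (intro equalityI subsetI)
    fix y assume "y \<in> zclass R ` set_mset R"
    then obtain x where x: "x \<in># R" "y = zclass R x" by auto
    show "y \<in> insert (zclass R \<alpha>) (zclass R' ` set_mset R')"
    proof (cases "refl_equiv \<alpha> x")
      case True
      then show ?thesis using x refl_equiv_class_eq by (simp add: zclass_eq_filter_refl_equiv)
    next
      case False
      then show ?thesis using x other_class by (auto simp: R'_def)
    qed
  qed (use assms other_class in \<open>auto simp: R'_def\<close>)
  moreover have "zclass R \<alpha> \<notin> zclass R' ` set_mset R'"
  proof
    assume "zclass R \<alpha> \<in> zclass R' ` set_mset R'"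
    then obtain x where "x \<in># R'" "zclass R \<alpha> = zclass R' x" by auto
    moreover have "\<alpha> \<in># zclass R \<alpha>" using assms by (simp add: zclass_def)
    ultimately show False by (auto simp: R'_def zclass_def refl_equiv_def)
  qed
  ultimately have "NN R = class_count (zclass R \<alpha>) * NN R'"
    by (simp add: NN_def)
  then show ?thesis by (simp add: zclass_eq_filter_refl_equiv R'_def)
qed

lemma halves_on_circle:
  assumes R: "\<forall>x\<in>#R. x = \<alpha>" and \<alpha>: "cmod \<alpha> = 1" and Z0: "Z0 \<in> halves R"
  shows "halves R = {Z0}"
proof -
  have "\<alpha> \<noteq> 0" using \<alpha> by auto
  then have fixed: "inv_cnj \<alpha> = \<alpha>" using \<alpha> inv_cnj_fixed_iff by simp
  have "Z = Z0" if Z: "Z \<in> halves R" for Z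
  proof (rule multiset_eqI)
    fix x
    show "count Z x = count Z0 x"
    proof (cases "x = \<alpha>")
      case True
      have "count Z \<alpha> + count Z (inv_cnj \<alpha>) = count R \<alpha>"
        "count Z0 \<alpha> + count Z0 (inv_cnj \<alpha>) = count R \<alpha>"
        using Z Z0 by (simp_all add: halves_iff_count)
      then show ?thesis using True fixed by simp
    next
      case False
      then have "count R x = 0" using R by (auto simp: count_eq_zero_iff)
      then show ?thesis using count_le_if_halves[OF Z, of x] count_le_if_halves[OF Z0, of x] by simp
    qed
  qed
  with Z0 show ?thesis by blast
qed

lemma count_inv_cnj_if_halves: "Z \<in> halves R \<Longrightarrow> count R (inv_cnj x) = count R x"
proof -
  assume "Z \<in> halves R"
  then have "count Z y + count Z (inv_cnj y) = count R y" for y by (simp add: halves_iff_count)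
  from this[of x] this[of "inv_cnj x"] show ?thesis by simp
qed

lemma size_if_halves: "Z \<in> halves R \<Longrightarrow> size R = 2 * size Z"
  by (auto simp: halves_def)

lemma halves_pair_decompose:
  assumes R: "\<forall>x\<in>#R. refl_equiv \<alpha> x" and "inv_cnj \<alpha> \<noteq> \<alpha>" and Z: "Z \<in> halves R"
  shows "Z = replicate_mset (count Z \<alpha>) \<alpha> + replicate_mset (count R \<alpha> - count Z \<alpha>) (inv_cnj \<alpha>)"
proof (rule multiset_eqI)
  fix x
  have sum: "count Z \<alpha> + count Z (inv_cnj \<alpha>) = count R \<alpha>" using Z by (simp add: halves_iff_count)
  consider "x = \<alpha>" | "x = inv_cnj \<alpha>" | "x \<noteq> \<alpha>" "x \<noteq> inv_cnj \<alpha>" by blast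
  then show "count Z x
      = count (replicate_mset (count Z \<alpha>) \<alpha> + replicate_mset (count R \<alpha> - count Z \<alpha>) (inv_cnj \<alpha>)) x"
  proof cases
    case 3
    then have "count R x = 0" using R by (auto simp: count_eq_zero_iff refl_equiv_def)
    then show ?thesis using count_le_if_halves[OF Z, of x] 3 by simp
  qed (use sum assms(2) in auto)
qed

lemma replicate_pair_mem_halves:
  assumes R: "\<forall>x\<in>#R. refl_equiv \<alpha> x" and "inv_cnj \<alpha> \<noteq> \<alpha>" "\<alpha> \<noteq> 0"
    and "count R (inv_cnj \<alpha>) = count R \<alpha>" "j \<le> count R \<alpha>"
  shows "replicate_mset j \<alpha> + replicate_mset (count R \<alpha> - j) (inv_cnj \<alpha>) \<in> halves R"
  unfolding halves_iff_count
proof (intro conjI allI)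
  fix x
  consider "x = \<alpha>" | "x = inv_cnj \<alpha>" | "x \<noteq> \<alpha>" "x \<noteq> inv_cnj \<alpha>" by blast
  then show "count (replicate_mset j \<alpha> + replicate_mset (count R \<alpha> - j) (inv_cnj \<alpha>)) x
      + count (replicate_mset j \<alpha> + replicate_mset (count R \<alpha> - j) (inv_cnj \<alpha>)) (inv_cnj x)
      = count R x"
  proof cases
    case 3
    then have "inv_cnj x \<noteq> \<alpha>" "inv_cnj x \<noteq> inv_cnj \<alpha>" by (auto simp: inv_cnj_eq_iff)
    moreover have "count R x = 0" using R 3 by (auto simp: count_eq_zero_iff refl_equiv_def)
    ultimately show ?thesis using 3 by simp
  qed (use assms(2,4,5) in auto)
qed (use assms(3) in simp)

lemma halves_pair:
  assumes R: "\<forall>x\<in>#R. refl_equiv \<alpha> x" and \<alpha>: "inv_cnj \<alpha> \<noteq> \<alpha>" "\<alpha> \<noteq> 0" and Z0: "Z0 \<in> halves R"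
  shows "halves R
    = (\<lambda>j. replicate_mset j \<alpha> + replicate_mset (count R \<alpha> - j) (inv_cnj \<alpha>)) ` {0..count R \<alpha>}"
proof (intro equalityI subsetI)
  fix Z assume Z: "Z \<in> halves R"
  show "Z \<in> (\<lambda>j. replicate_mset j \<alpha> + replicate_mset (count R \<alpha> - j) (inv_cnj \<alpha>)) ` {0..count R \<alpha>}"
  proof (rule image_eqI)
    show "count Z \<alpha> \<in> {0..count R \<alpha>}" using count_le_if_halves[OF Z] by simp
  qed (rule halves_pair_decompose[OF R \<alpha>(1) Z])
qed (use replicate_pair_mem_halves[OF R \<alpha> count_inv_cnj_if_halves[OF Z0]] in auto)

lemma card_halves_single_class:
  assumes \<alpha>: "\<alpha> \<in># R" and R: "\<forall>x\<in>#R. refl_equiv \<alpha> x" and Z0: "Z0 \<in> halves R"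
  shows "finite (halves R) \<and> card (halves R) = class_count R"
proof -
  have "\<alpha> \<noteq> 0" using zero_notin_if_halves[OF Z0] \<alpha> by auto
  show ?thesis
  proof (cases "cmod \<alpha> = 1")
    case True
    then have "inv_cnj \<alpha> = \<alpha>" using inv_cnj_fixed_iff[OF \<open>\<alpha> \<noteq> 0\<close>] by simp
    then have "\<forall>x\<in>#R. x = \<alpha>" using R by (simp add: refl_equiv_def)
    then have "halves R = {Z0}" using halves_on_circle True Z0 by blast
    moreover have "class_count R = 1" using \<alpha> True by (auto simp: class_count_def)
    ultimately show ?thesis by simp
  next
    case False
    define n where "n = count R \<alpha>"
    define F where "F j = replicate_mset j \<alpha> + replicate_mset (n - j) (inv_cnj \<alpha>)" for j
    have "inv_cnj \<alpha> \<noteq> \<alpha>" using False inv_cnj_fixed_iff[OF \<open>\<alpha> \<noteq> 0\<close>] by simp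
    then have "count (F j) \<alpha> = j" for j by (simp add: F_def)
    then have "inj_on F {0..n}" by (metis inj_onI)
    moreover have "halves R = F ` {0..n}"
      using halves_pair[OF R \<open>inv_cnj \<alpha> \<noteq> \<alpha>\<close> \<open>\<alpha> \<noteq> 0\<close> Z0] by (simp add: F_def n_def)
    moreover have "class_count R = n + 1"
    proof -
      have "cmod (inv_cnj \<alpha>) \<noteq> 1" using False by (simp add: norm_inv_cnj)
      then have "\<not> (\<exists>x\<in>#R. cmod x = 1)" using R False by (auto simp: refl_equiv_def)
      moreover have "size Z0 = n"
        by (subst halves_pair_decompose[OF R \<open>inv_cnj \<alpha> \<noteq> \<alpha>\<close> Z0])
           (use count_le_if_halves[OF Z0, of \<alpha>] in \<open>simp add: n_def\<close>)
      ultimately show ?thesis using size_if_halves[OF Z0] by (simp add: class_count_def)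
    qed
    ultimately show ?thesis by (simp add: card_image)
  qed
qed

lemma card_halves: "halves R \<noteq> {} \<Longrightarrow> finite (halves R) \<and> card (halves R) = NN R"
proof (induction "size R" arbitrary: R rule: less_induct)
  case less
  show ?case
  proof (cases "R = {#}")
    case True
    moreover have "halves {#} = {{#}}" by (auto simp: halves_def)
    ultimately show ?thesis by (simp add: NN_def)
  next
    case False
    then obtain \<alpha> where \<alpha>: "\<alpha> \<in># R" by blast
    obtain Z0 where Z0: "Z0 \<in> halves R" using less.prems by blast
    let ?Q = "refl_equiv \<alpha>"
    let ?R1 = "filter_mset ?Q R" and ?R2 = "filter_mset (\<lambda>x. \<not> ?Q x) R"
    have bij: "bij_betw (\<lambda>Z. (filter_mset ?Q Z, filter_mset (\<lambda>x. \<not> ?Q x) Z)) (halves R)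
        (halves ?R1 \<times> halves ?R2)"
      by (rule bij_betw_halves_filter) (rule refl_equiv_inv_cnj)
    have one: "finite (halves ?R1) \<and> card (halves ?R1) = class_count ?R1"
      using halves_filter[of ?Q, OF refl_equiv_inv_cnj Z0] \<alpha>
      by (intro card_halves_single_class[of \<alpha>]) (auto simp: refl_equiv_def)
    have "size R = size ?R1 + size ?R2"
      using multiset_partition[of R ?Q] by (metis size_union)
    moreover have "size ?R1 \<noteq> 0" using \<alpha> by (auto simp: refl_equiv_def)
    ultimately have "size ?R2 < size R" by linarith
    moreover have "halves ?R2 \<noteq> {}"
      using halves_filter[of "\<lambda>x. \<not> ?Q x", OF _ Z0] refl_equiv_inv_cnj by auto
    ultimately have rest: "finite (halves ?R2) \<and> card (halves ?R2) = NN ?R2"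
      using less.hyps by blast
    show ?thesis
      using bij_betw_finite[OF bij] bij_betw_same_card[OF bij] one rest NN_split_class[OF \<alpha>]
      by (simp add: card_cartesian_product)
  qed
qed

section \<open>The fibre over a and its components\<close>

lemma bij_betw_images_same_kernel:
  assumes kernel: "\<And>x y. x \<in> A \<Longrightarrow> y \<in> A \<Longrightarrow> f x = f y \<longleftrightarrow> g x = g y"
  shows "bij_betw (\<lambda>y. g (inv_into A f y)) (f ` A) (g ` A)"
proof (rule bij_betw_imageI)
  have inv: "inv_into A f (f x) \<in> A" "f (inv_into A f (f x)) = f x" if "x \<in> A" for x
    using that by (simp_all add: inv_into_into f_inv_into_f)
  show "inj_on (\<lambda>y. g (inv_into A f y)) (f ` A)"
  proof (rule inj_onI)
    fix u v assume "u \<in> f ` A" "v \<in> f ` A" and eq: "g (inv_into A f u) = g (inv_into A f v)"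
    then obtain x y where "x \<in> A" "y \<in> A" "u = f x" "v = f y" by blast
    with eq show "u = v" using kernel[of "inv_into A f (f x)" "inv_into A f (f y)"] inv by simp
  qed
  have "g (inv_into A f (f x)) = g x" if "x \<in> A" for x
    using kernel[of "inv_into A f (f x)" x] inv[OF that] that by simp
  then show "(\<lambda>y. g (inv_into A f y)) ` f ` A = g ` A"
    by (simp add: image_image cong: image_cong)
qed

definition complements :: "(int \<Rightarrow> complex) \<Rightarrow> (int \<Rightarrow> complex) set" where
  "complements a = {b. lpoly b \<and> lp_mul b (lp_star b) = lp_sub lp_one (lp_mul a (lp_star a))}"

lemma lpoly_if_mem_complements: "b \<in> complements a \<Longrightarrow> lpoly b"
  by (simp add: complements_def)

lemma S_set_iff_complements:
  assumes "a \<in> A_set"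
  shows "(a, b) \<in> S_set \<longleftrightarrow> b \<in> complements a"
proof -
  have "lp_add X Y = lp_one \<longleftrightarrow> Y = lp_sub lp_one X" for X Y :: "int \<Rightarrow> complex"
    by (auto simp: lp_add_def lp_sub_def fun_eq_iff algebra_simps)
  with assms show ?thesis by (auto simp: A_set_def S_set_def complements_def)
qed

lemma lp_scale_shift_mem_complements:
  "b \<in> complements a \<Longrightarrow> cmod l = 1 \<Longrightarrow> lp_scale_shift l k b \<in> complements a"
  by (simp add: complements_def lpoly_lp_scale_shift lp_mul_star_lp_scale_shift norm_eq_1_iff_mult_cnj)

lemma mem_component_iff:
  "(a', c) \<in> component a b \<longleftrightarrow> a' = a \<and> (\<exists>k l. cmod l = 1 \<and> c = lp_scale_shift l k b)"
  by (auto simp: component_def)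

lemma mem_component_self: "(a, b) \<in> component a b"
  unfolding mem_component_iff by (metis lp_scale_shift_1_0 norm_one)

lemma component_lp_scale_shift:
  assumes "cmod l = 1"
  shows "component a (lp_scale_shift l k b) = component a b"
proof (intro equalityI subsetI)
  fix x assume "x \<in> component a (lp_scale_shift l k b)"
  then obtain k' l' where "cmod l' = 1" "x = (a, lp_scale_shift (l' * l) (k' + k) b)"
    by (auto simp: component_def lp_scale_shift_lp_scale_shift)
  with assms show "x \<in> component a b"
    by (auto simp: mem_component_iff norm_mult intro!: exI[of _ "k' + k"] exI[of _ "l' * l"])
next
  fix x assume "x \<in> component a b"
  then obtain k' l' where "cmod l' = 1" "x = (a, lp_scale_shift l' k' b)"
    by (auto simp: component_def)
  moreover have "lp_scale_shift l' k' b = lp_scale_shift (l' / l) (k' - k) (lp_scale_shift l k b)"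
    using assms by (auto simp: lp_scale_shift_lp_scale_shift)
  ultimately show "x \<in> component a (lp_scale_shift l k b)"
    using assms by (auto simp: mem_component_iff norm_divide intro!: exI[of _ "k' - k"] exI[of _ "l' / l"])
qed

lemma components_disjoint:
  assumes "component a b \<noteq> component a b'"
  shows "component a b \<inter> component a b' = {}"
proof (rule ccontr)
  assume "component a b \<inter> component a b' \<noteq> {}"
  then obtain c where "(a, c) \<in> component a b" "(a, c) \<in> component a b'"
    by (auto simp: component_def)
  then obtain k l k' l' where "cmod l = 1" "c = lp_scale_shift l k b" "cmod l' = 1" "c = lp_scale_shift l' k' b'"
    unfolding mem_component_iff by blast
  then have "component a c = component a b" "component a c = component a b'"
    by (metis component_lp_scale_shift)+
  with assms show False by simp
qed

lemma bij_betw_component: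
  assumes "lpoly b" "b \<noteq> (\<lambda>_. 0)"
  shows "bij_betw (\<lambda>(k, l). (a, lp_scale_shift l k b)) (UNIV \<times> {z. cmod z = 1}) (component a b)"
proof (rule bij_betw_imageI)
  obtain m p where p: "coeff p 0 \<noteq> 0" "b = lp_of_poly m p"
    using lp_of_poly_normal_form[OF assms] .
  show "inj_on (\<lambda>(k, l). (a, lp_scale_shift l k b)) (UNIV \<times> {z. cmod z = 1})"
  proof (rule inj_onI, clarify)
    fix l l' :: complex and k k' :: int
    assume "cmod l = 1" "cmod l' = 1" "lp_scale_shift l k b = lp_scale_shift l' k' b"
    then have "m + k = m + k' \<and> smult l p = smult l' p"
      using p by (subst lp_of_poly_eq_iff[symmetric]) (auto simp: lp_scale_shift_lp_of_poly)
    then show "k = k' \<and> l = l'"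
      using p(1) by (metis add_left_cancel coeff_smult mult_cancel_right)
  qed
qed (auto simp: component_def)

lemma Union_components:
  "\<Union> (component a ` complements a) = Pair a ` complements a"
  using lp_scale_shift_mem_complements mem_component_self by (fastforce simp: component_def)

context
  fixes a :: "int \<Rightarrow> complex"
  assumes nontriv: "lp_sub lp_one (lp_mul a (lp_star a)) \<noteq> (\<lambda>_. 0)"
begin

lemma complements_nonzero: "b \<in> complements a \<Longrightarrow> b \<noteq> (\<lambda>_. 0)"
  using nontriv by (auto simp: complements_def)

lemma lp_zeros_complement:
  "b \<in> complements a \<Longrightarrow>
    lp_zeros (lp_sub lp_one (lp_mul a (lp_star a))) = lp_zeros b + image_mset inv_cnj (lp_zeros b)"
  using lp_zeros_mul_star[of b] complements_nonzero[of b] by (simp add: complements_def)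

lemma lp_zeros_complements_eq_iff:
  assumes "b \<in> complements a" "b' \<in> complements a"
  shows "lp_zeros b = lp_zeros b' \<longleftrightarrow> (\<exists>l k. cmod l = 1 \<and> b' = lp_scale_shift l k b)"
proof -
  have b: "lpoly b" "b \<noteq> (\<lambda>_. 0)" and b': "lpoly b'" "b' \<noteq> (\<lambda>_. 0)"
    using assms complements_nonzero by (auto simp: complements_def)
  have "l * cnj l = 1" if "b' = lp_scale_shift l k b" for l k
  proof -
    have "lp_scale_shift (l * cnj l) 0 (lp_sub lp_one (lp_mul a (lp_star a)))
        = lp_scale_shift 1 0 (lp_sub lp_one (lp_mul a (lp_star a)))"
      using assms that by (simp add: complements_def lp_mul_star_lp_scale_shift)
    then show ?thesis
      using nontriv by (auto simp: lp_scale_shift_def fun_eq_iff)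
  qed
  then have "(\<exists>l k. l \<noteq> 0 \<and> b' = lp_scale_shift l k b) \<longleftrightarrow> (\<exists>l k. cmod l = 1 \<and> b' = lp_scale_shift l k b)"
    unfolding norm_eq_1_iff_mult_cnj by (metis mult_zero_left zero_neq_one)
  then show ?thesis using lp_zeros_eq_iff_lp_scale_shift[OF b b'] by simp
qed

lemma rescaled_mem_complements:
  assumes b0: "b0 \<in> complements a" and b: "lpoly b" "b \<noteq> (\<lambda>_. 0)"
    and zeros: "lp_zeros (lp_sub lp_one (lp_mul a (lp_star a))) = lp_zeros b + image_mset inv_cnj (lp_zeros b)"
  shows "\<exists>l. l \<noteq> 0 \<and> lp_scale_shift l 0 b \<in> complements a"
proof -
  have "lpoly b0" "b0 \<noteq> (\<lambda>_. 0)" using b0 complements_nonzero by (auto simp: complements_def)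
  moreover have "lp_zeros (lp_mul b (lp_star b)) = lp_zeros (lp_mul b0 (lp_star b0))"
    using b zeros lp_zeros_mul_star b0 by (simp add: complements_def)
  ultimately obtain r where "r > 0"
    and r: "lp_mul b0 (lp_star b0) = lp_scale_shift (of_real r) 0 (lp_mul b (lp_star b))"
    using lp_mul_star_eq_if_same_zeros[OF b] by blast
  define l where "l = complex_of_real (sqrt r)"
  have "l * cnj l = of_real r" using \<open>r > 0\<close> by (simp add: l_def flip: of_real_mult)
  then have "lp_mul (lp_scale_shift l 0 b) (lp_star (lp_scale_shift l 0 b)) = lp_mul b0 (lp_star b0)"
    by (simp add: lp_mul_star_lp_scale_shift r)
  moreover have "l \<noteq> 0" using \<open>r > 0\<close> by (simp add: l_def)
  ultimately show ?thesis
    using b0 b by (auto simp: complements_def lpoly_lp_scale_shift)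
qed

lemma lp_zeros_image_complements:
  assumes b0: "b0 \<in> complements a"
  shows "lp_zeros ` complements a = halves (lp_zeros (lp_sub lp_one (lp_mul a (lp_star a))))"
proof (intro equalityI subsetI)
  fix Z assume "Z \<in> lp_zeros ` complements a"
  then obtain b where b: "b \<in> complements a" "Z = lp_zeros b" by blast
  then have "0 \<notin># Z"
    using zero_notin_lp_zeros complements_nonzero by (simp add: complements_def)
  with b show "Z \<in> halves (lp_zeros (lp_sub lp_one (lp_mul a (lp_star a))))"
    by (simp add: halves_def lp_zeros_complement)
next
  fix Z assume Z: "Z \<in> halves (lp_zeros (lp_sub lp_one (lp_mul a (lp_star a))))"
  define p where "p = (\<Prod>x\<in>#Z. [:-x, 1:])"
  have "0 \<notin># Z" using Z by (simp add: halves_def)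
  then have p: "coeff p 0 \<noteq> 0" by (auto simp: p_def poly_0_coeff_0[symmetric] poly_prod_mset)
  then have zeros: "lp_zeros (lp_scale_shift l 0 (lp_of_poly 0 p)) = Z" if "l \<noteq> 0" for l
    using that by (simp add: lp_scale_shift_lp_of_poly lp_zeros_lp_of_poly p_def proots_prod_linear_factors)
  have nonzero: "lp_of_poly 0 p \<noteq> (\<lambda>_. 0)" using p by auto
  have "lp_zeros (lp_of_poly 0 p) = Z" using zeros[of 1] by simp
  then obtain l where "l \<noteq> 0" "lp_scale_shift l 0 (lp_of_poly 0 p) \<in> complements a"
    using rescaled_mem_complements[OF b0 lpoly_lp_of_poly nonzero] Z by (auto simp: halves_def)
  with zeros show "Z \<in> lp_zeros ` complements a" by (metis image_eqI)
qed

lemma filter_circle_lp_zeros_complements: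
  assumes "b \<in> complements a" "b' \<in> complements a"
  shows "filter_mset (\<lambda>z. cmod z = 1) (lp_zeros b) = filter_mset (\<lambda>z. cmod z = 1) (lp_zeros b')"
proof -
  let ?T = "filter_mset (\<lambda>z. cmod z = 1)"
  have "?T (lp_zeros b) + ?T (lp_zeros b) = ?T (lp_zeros b') + ?T (lp_zeros b')"
    using lp_zeros_complement[OF assms(1)] lp_zeros_complement[OF assms(2)]
    by (simp flip: filter_mset_circle_add_image_inv_cnj)
  then have "count (?T (lp_zeros b)) x + count (?T (lp_zeros b)) x
      = count (?T (lp_zeros b')) x + count (?T (lp_zeros b')) x" for x
    by (metis count_union)
  then show ?thesis by (intro multiset_eqI) (metis add_self_div_2)
qed

lemma component_eq_iff:
  assumes "b \<in> complements a" "b' \<in> complements a"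
  shows "component a b = component a b' \<longleftrightarrow> lp_zeros b = lp_zeros b'"
proof
  assume "component a b = component a b'"
  then have "(a, b') \<in> component a b" using mem_component_self by metis
  then show "lp_zeros b = lp_zeros b'"
    using lp_zeros_complements_eq_iff[OF assms] by (auto simp: mem_component_iff)
next
  assume "lp_zeros b = lp_zeros b'"
  then obtain k l where "cmod l = 1" "b' = lp_scale_shift l k b"
    using lp_zeros_complements_eq_iff[OF assms] by blast
  then show "component a b = component a b'" by (simp add: component_lp_scale_shift)
qed

lemma finite_card_components:
  assumes "b0 \<in> complements a"
  shows "finite (component a ` complements a)
    \<and> card (component a ` complements a) = NN (lp_zeros (lp_sub lp_one (lp_mul a (lp_star a))))"
proof -
  have "bij_betw (\<lambda>Z. component a (inv_into (complements a) lp_zeros Z))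
      (halves (lp_zeros (lp_sub lp_one (lp_mul a (lp_star a))))) (component a ` complements a)"
    unfolding lp_zeros_image_complements[OF assms, symmetric]
    by (rule bij_betw_images_same_kernel) (simp add: component_eq_iff)
  moreover have "halves (lp_zeros (lp_sub lp_one (lp_mul a (lp_star a)))) \<noteq> {}"
    using lp_zeros_image_complements[OF assms] assms by blast
  ultimately show ?thesis
    using card_halves bij_betw_finite bij_betw_same_card by metis
qed

lemma ex_bij_betw_component:
  "b \<in> complements a \<Longrightarrow> \<exists>f. bij_betw f ((UNIV :: int set) \<times> {z. cmod z = 1}) (component a b)"
  by (rule exI, rule bij_betw_component[OF lpoly_if_mem_complements complements_nonzero])

end

theorem lemmaA3:
  fixes a :: "int \<Rightarrow> complex"
  assumes aA: "a \<in> A_set"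
    and nontriv: "lp_sub lp_one (lp_mul a (lp_star a)) \<noteq> (\<lambda>_. 0)"
  shows
    "(let R = lp_zeros (lp_sub lp_one (lp_mul a (lp_star a)));
          F = {p \<in> S_set. fst p = a};
          C = {component a b | b. (a, b) \<in> F}
      in \<Union>C = F
       \<and> (\<forall>X\<in>C. \<forall>Y\<in>C. X \<noteq> Y \<longrightarrow> X \<inter> Y = {})
       \<and> finite C \<and> card C = NN R
       \<and> (\<forall>X\<in>C. \<exists>f. bij_betw f ((UNIV :: int set) \<times> {z::complex. cmod z = 1}) X)
       \<and> (\<forall>b b'. (a, b) \<in> F \<longrightarrow> (a, b') \<in> F \<longrightarrow>
            (component a b \<noteq> component a b' \<longleftrightarrow> lp_zeros b \<noteq> lp_zeros b')
          \<and> filter_mset (\<lambda>z. cmod z = 1) (lp_zeros b)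
              = filter_mset (\<lambda>z. cmod z = 1) (lp_zeros b'))
       \<and> (\<forall>b. lpoly b \<longrightarrow> b \<noteq> (\<lambda>_. 0) \<longrightarrow>
            ((a, b) \<in> S_set \<longrightarrow> R = (\<Sum>\<alpha>\<in>#lp_zeros b. {#\<alpha>, 1 / cnj \<alpha>#}))
          \<and> (R = (\<Sum>\<alpha>\<in>#lp_zeros b. {#\<alpha>, 1 / cnj \<alpha>#}) \<longrightarrow>
               (\<exists>l. l \<noteq> 0 \<and> (a, lp_scale_shift l 0 b) \<in> S_set))))"
proof -
  obtain b0 where "(a, b0) \<in> S_set" using aA by (auto simp: A_set_def)
  then have b0: "b0 \<in> complements a" using S_set_iff_complements[OF aA] by blast
  have F: "{p \<in> S_set. fst p = a} = Pair a ` complements a"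
    using S_set_iff_complements[OF aA] by force
  have C: "{component a b | b. (a, b) \<in> Pair a ` complements a} = component a ` complements a"
    by auto
  have disjoint: "\<forall>X\<in>component a ` complements a. \<forall>Y\<in>component a ` complements a. X \<noteq> Y \<longrightarrow> X \<inter> Y = {}"
    using components_disjoint by blast
  have bijections: "\<forall>X\<in>component a ` complements a. \<exists>f. bij_betw f ((UNIV :: int set) \<times> {z. cmod z = 1}) X"
    using ex_bij_betw_component[OF nontriv] by blast
  have same_component_iff: "\<forall>b b'. (a, b) \<in> Pair a ` complements a \<longrightarrow> (a, b') \<in> Pair a ` complements a \<longrightarrow>
      (component a b \<noteq> component a b' \<longleftrightarrow> lp_zeros b \<noteq> lp_zeros b')
      \<and> filter_mset (\<lambda>z. cmod z = 1) (lp_zeros b) = filter_mset (\<lambda>z. cmod z = 1) (lp_zeros b')"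
    using component_eq_iff[OF nontriv] filter_circle_lp_zeros_complements[OF nontriv] by blast
  have zeros_criterion: "\<forall>b. lpoly b \<longrightarrow> b \<noteq> (\<lambda>_. 0) \<longrightarrow>
      ((a, b) \<in> S_set \<longrightarrow> lp_zeros (lp_sub lp_one (lp_mul a (lp_star a))) = (\<Sum>\<alpha>\<in>#lp_zeros b. {#\<alpha>, 1 / cnj \<alpha>#}))
      \<and> (lp_zeros (lp_sub lp_one (lp_mul a (lp_star a))) = (\<Sum>\<alpha>\<in>#lp_zeros b. {#\<alpha>, 1 / cnj \<alpha>#}) \<longrightarrow>
         (\<exists>l. l \<noteq> 0 \<and> (a, lp_scale_shift l 0 b) \<in> S_set))"
    unfolding sum_mset_pair_inv_cnj S_set_iff_complements[OF aA]
    using lp_zeros_complement[OF nontriv] rescaled_mem_complements[OF nontriv b0] by blast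
  show ?thesis
    unfolding Let_def F C using finite_card_components[OF nontriv b0]
    by (intro conjI Union_components disjoint bijections same_component_iff zeros_criterion) simp_all
qed

end
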